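(* At points $(\tau,\eta)\in\Sigma$: if $a_{12}=0$, then $\partial_\gamma a_{12}\neq0$ and $\partial_\gamma a_{21}\neq0$; if $a_{21}=0$, then $\partial_\gamma a_{12}\neq0$ and $\partial_\gamma a_{21}\neq0$; if $a_{34}=0$, then $\partial_\gamma a_{34}\neq0$.
   Context: Constants of a basic state: $\dot v\neq0$, $\dot\rho>0$, $\dot H\neq0$, $\dot\alpha>0$ with $\dot\alpha\dot H^2\neq1$; $\varepsilon>0$ a parameter. Write $\tau=\gamma+i\delta$, $\Sigma=\{(\tau,\eta)\in\mathbb C\times\mathbb R:|\tau|^2+\eta^2=1,\ \gamma\ge0\}$, $\mu=\tau+i\dot v\eta$, and \[ a_{12}=-\frac{\mu^2\dot\rho+\eta^2\dot H^2}{\mu},\quad a_{21}=-\frac{\mu(\dot\alpha\dot\rho\mu^2+\eta^2)}{(\mu^2\dot\rho\dot\alpha+\eta^2)\dot H^2+\mu^2\dot\rho},\quad a_{34}=-\frac{\varepsilon^2\tau^2+\eta^2}{\varepsilon\tau}, \] considered at points where they are defined; $\partial_\gamma$ denotes the partial derivative in $\gamma$ with $\delta,\eta$ fixed. *)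

theory Defs
  imports "HOL-Analysis.Analysis"
begin

text \<open>Basic-state constants v, rho, H, alpha (reals) and the parameter eps.
  The point is tau = gamma + i delta (complex), eta real.\<close>

definition mu :: "real \<Rightarrow> complex \<Rightarrow> real \<Rightarrow> complex" where
  "mu v tau eta = tau + \<i> * complex_of_real (v * eta)"

definition a12 :: "real \<Rightarrow> real \<Rightarrow> real \<Rightarrow> complex \<Rightarrow> real \<Rightarrow> complex" where
  "a12 v rho H tau eta =
     - ((mu v tau eta)\<^sup>2 * complex_of_real rho + complex_of_real (eta\<^sup>2 * H\<^sup>2)) / mu v tau eta"

definition a21_den :: "real \<Rightarrow> real \<Rightarrow> real \<Rightarrow> real \<Rightarrow> complex \<Rightarrow> real \<Rightarrow> complex" where
  "a21_den v rho H alpha tau eta =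
     ((mu v tau eta)\<^sup>2 * complex_of_real (rho * alpha) + complex_of_real (eta\<^sup>2)) * complex_of_real (H\<^sup>2)
     + (mu v tau eta)\<^sup>2 * complex_of_real rho"

definition a21 :: "real \<Rightarrow> real \<Rightarrow> real \<Rightarrow> real \<Rightarrow> complex \<Rightarrow> real \<Rightarrow> complex" where
  "a21 v rho H alpha tau eta =
     - (mu v tau eta * (complex_of_real (alpha * rho) * (mu v tau eta)\<^sup>2 + complex_of_real (eta\<^sup>2)))
       / a21_den v rho H alpha tau eta"

definition a34 :: "real \<Rightarrow> complex \<Rightarrow> real \<Rightarrow> complex" where
  "a34 eps tau eta =
     - (complex_of_real (eps\<^sup>2) * tau\<^sup>2 + complex_of_real (eta\<^sup>2)) / (complex_of_real eps * tau)"

definition in_Sigma :: "real \<Rightarrow> real \<Rightarrow> real \<Rightarrow> bool" where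
  "in_Sigma g d eta \<longleftrightarrow> g\<^sup>2 + d\<^sup>2 + eta\<^sup>2 = 1 \<and> g \<ge> 0"

definition dgamma_nonzero :: "(real \<Rightarrow> complex) \<Rightarrow> real \<Rightarrow> bool" where
  "dgamma_nonzero f g \<longleftrightarrow> (\<exists>D. (f has_vector_derivative D) (at g) \<and> D \<noteq> 0)"

end

theory Submission imports Defs begin

text \<open>Each symbol is holomorphic in tau and d mu / d tau = 1, so its gamma-derivative is its
  complex derivative. At a zero of a12 or a21, mu^2 is a negative real fixed by the zero
  condition (likewise tau^2 at a zero of a34), and substituting it into the derivatives leaves
  nonzero reals: -2 rho and -rho (1 + alpha H^2) for a12, -(alpha^2 H^4 - alpha H^2 + 2) /
  (alpha^2 H^6) and -2 alpha for a21, -2 eps for a34.\<close>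

lemma has_vector_derivative_along_real_axis:
  assumes "(f has_field_derivative D) (at (Complex g d))"
  shows "((\<lambda>x. f (Complex x d)) has_vector_derivative D) (at g)"
proof -
  have line: "(\<lambda>x. Complex x d) = (\<lambda>x. of_real x + \<i> * of_real d)"
    by (auto simp: complex_eq_iff)
  have "((\<lambda>x. Complex x d) has_vector_derivative 1) (at g)"
    unfolding line by (auto intro!: derivative_eq_intros)
  from field_vector_diff_chain_at[OF this, of f D] assms show ?thesis
    by (simp add: o_def)
qed

lemma dgamma_nonzeroI:
  assumes "(f has_field_derivative D) (at (Complex g d))" and "D \<noteq> 0"
  shows "dgamma_nonzero (\<lambda>x. f (Complex x d)) g"
  using has_vector_derivative_along_real_axis[OF assms(1)] assms(2)
  unfolding dgamma_nonzero_def by blast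

definition a12_deriv :: "real \<Rightarrow> real \<Rightarrow> real \<Rightarrow> complex \<Rightarrow> real \<Rightarrow> complex" where
  "a12_deriv v rho H tau eta =
     - (of_real rho - of_real (eta\<^sup>2 * H\<^sup>2) / (mu v tau eta)\<^sup>2)"

text \<open>Quotient rule for a21 = - N / D, where N = mu (alpha rho mu^2 + eta^2) and
  D = a21_den = rho (alpha H^2 + 1) mu^2 + eta^2 H^2.\<close>
definition a21_deriv :: "real \<Rightarrow> real \<Rightarrow> real \<Rightarrow> real \<Rightarrow> complex \<Rightarrow> real \<Rightarrow> complex" where
  "a21_deriv v rho H alpha tau eta =
     - ((3 * of_real (alpha * rho) * (mu v tau eta)\<^sup>2 + of_real (eta\<^sup>2)) * a21_den v rho H alpha tau eta
        - 2 * (mu v tau eta)\<^sup>2 * (of_real (alpha * rho) * (mu v tau eta)\<^sup>2 + of_real (eta\<^sup>2))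
            * of_real (rho * (alpha * H\<^sup>2 + 1)))
     / (a21_den v rho H alpha tau eta)\<^sup>2"

definition a34_deriv :: "real \<Rightarrow> complex \<Rightarrow> real \<Rightarrow> complex" where
  "a34_deriv eps tau eta = - (of_real eps - of_real (eta\<^sup>2) / (of_real eps * tau\<^sup>2))"

lemma mu_has_field_derivative:
  "((\<lambda>t. mu v t eta) has_field_derivative 1) (at tau)"
  unfolding mu_def by (auto intro!: derivative_eq_intros)

lemma a12_has_field_derivative:
  assumes "mu v tau eta \<noteq> 0"
  shows "((\<lambda>t. a12 v rho H t eta) has_field_derivative a12_deriv v rho H tau eta) (at tau)"
  using assms unfolding a12_def a12_deriv_def
  by (auto intro!: derivative_eq_intros mu_has_field_derivative simp: power2_eq_square field_simps)

lemma a21_has_field_derivative: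
  assumes "a21_den v rho H alpha tau eta \<noteq> 0"
  shows "((\<lambda>t. a21 v rho H alpha t eta) has_field_derivative a21_deriv v rho H alpha tau eta) (at tau)"
  using assms unfolding a21_def a21_deriv_def a21_den_def
  by (auto intro!: derivative_eq_intros mu_has_field_derivative simp: power2_eq_square field_simps)

lemma a34_has_field_derivative:
  assumes "tau \<noteq> 0" and "eps \<noteq> 0"
  shows "((\<lambda>t. a34 eps t eta) has_field_derivative a34_deriv eps tau eta) (at tau)"
  using assms unfolding a34_def a34_deriv_def
  by (auto intro!: derivative_eq_intros simp: power2_eq_square field_simps)

lemma a12_eq_0_iff:
  assumes "mu v tau eta \<noteq> 0"
  shows "a12 v rho H tau eta = 0 \<longleftrightarrow> of_real rho * (mu v tau eta)\<^sup>2 = - of_real (eta\<^sup>2 * H\<^sup>2)"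
  using assms unfolding a12_def by (simp add: add_eq_0_iff2 mult.commute) (metis minus_equation_iff)

lemma a21_eq_0_iff:
  assumes "mu v tau eta \<noteq> 0" and "a21_den v rho H alpha tau eta \<noteq> 0"
  shows "a21 v rho H alpha tau eta = 0 \<longleftrightarrow> of_real (alpha * rho) * (mu v tau eta)\<^sup>2 = - of_real (eta\<^sup>2)"
  using assms unfolding a21_def by (auto simp: add_eq_0_iff2)

lemma a34_eq_0_iff:
  assumes "tau \<noteq> 0" and "eps \<noteq> 0"
  shows "a34 eps tau eta = 0 \<longleftrightarrow> of_real (eps\<^sup>2) * tau\<^sup>2 = - of_real (eta\<^sup>2)"
  using assms unfolding a34_def by (simp add: add_eq_0_iff2) (metis minus_equation_iff)

lemma a21_den_at_a12_zero:
  assumes "of_real rho * (mu v tau eta)\<^sup>2 = - of_real (eta\<^sup>2 * H\<^sup>2)"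
  shows "a21_den v rho H alpha tau eta = - of_real (alpha * eta\<^sup>2 * H ^ 4)"
proof -
  have "a21_den v rho H alpha tau eta
      = (of_real alpha * (of_real rho * (mu v tau eta)\<^sup>2) + of_real (eta\<^sup>2)) * of_real (H\<^sup>2)
        + of_real rho * (mu v tau eta)\<^sup>2"
    unfolding a21_den_def by (simp add: algebra_simps)
  also have "\<dots> = - of_real (alpha * eta\<^sup>2 * H ^ 4)"
    unfolding assms by (simp add: algebra_simps power4_eq_xxxx power2_eq_square)
  finally show ?thesis .
qed

lemma a21_den_at_a21_zero:
  assumes "of_real (alpha * rho) * (mu v tau eta)\<^sup>2 = - of_real (eta\<^sup>2)"
  shows "a21_den v rho H alpha tau eta = of_real rho * (mu v tau eta)\<^sup>2"
  using assms unfolding a21_den_def by (simp add: algebra_simps)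

lemma a12_deriv_at_a12_zero:
  assumes "mu v tau eta \<noteq> 0"
    and "of_real rho * (mu v tau eta)\<^sup>2 = - of_real (eta\<^sup>2 * H\<^sup>2)"
  shows "a12_deriv v rho H tau eta = - of_real (2 * rho)"
proof -
  have "of_real (eta\<^sup>2 * H\<^sup>2) = - (of_real rho * (mu v tau eta)\<^sup>2)"
    by (simp only: assms(2) minus_minus)
  then show ?thesis
    using assms(1) unfolding a12_deriv_def by simp
qed

lemma a12_deriv_at_a21_zero:
  assumes "mu v tau eta \<noteq> 0"
    and "of_real (alpha * rho) * (mu v tau eta)\<^sup>2 = - of_real (eta\<^sup>2)"
  shows "a12_deriv v rho H tau eta = - of_real (rho * (1 + alpha * H\<^sup>2))"
proof -
  have "of_real (eta\<^sup>2) = - (of_real (alpha * rho) * (mu v tau eta)\<^sup>2)"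
    by (simp only: assms(2) minus_minus)
  then show ?thesis
    using assms(1) unfolding a12_deriv_def of_real_mult[of "eta\<^sup>2" "H\<^sup>2"]
    by (simp add: algebra_simps)
qed

lemma a21_deriv_at_a12_zero:
  assumes "alpha \<noteq> 0" "H \<noteq> 0" "eta \<noteq> 0"
    and zero: "of_real rho * (mu v tau eta)\<^sup>2 = - of_real (eta\<^sup>2 * H\<^sup>2)"
  shows "a21_deriv v rho H alpha tau eta
    = - of_real (((alpha * H\<^sup>2)\<^sup>2 - alpha * H\<^sup>2 + 2) / (alpha\<^sup>2 * H ^ 6))"
proof -
  let ?P = "of_real rho * (mu v tau eta)\<^sup>2"
  have evaluated: "- ((3 * alpha * - (eta\<^sup>2 * H\<^sup>2) + eta\<^sup>2) * - (alpha * eta\<^sup>2 * H ^ 4)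
           - 2 * - (eta\<^sup>2 * H\<^sup>2) * (alpha * - (eta\<^sup>2 * H\<^sup>2) + eta\<^sup>2) * (alpha * H\<^sup>2 + 1))
        / (- (alpha * eta\<^sup>2 * H ^ 4))\<^sup>2
      = - (((alpha * H\<^sup>2)\<^sup>2 - alpha * H\<^sup>2 + 2) / (alpha\<^sup>2 * H ^ 6))"
    using assms(1-3) by (simp add: divide_simps) algebra
  have "a21_deriv v rho H alpha tau eta
      = - ((3 * of_real alpha * ?P + of_real (eta\<^sup>2)) * a21_den v rho H alpha tau eta
           - 2 * ?P * (of_real alpha * ?P + of_real (eta\<^sup>2)) * of_real (alpha * H\<^sup>2 + 1))
        / (a21_den v rho H alpha tau eta)\<^sup>2"
    unfolding a21_deriv_def by (simp add: algebra_simps)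
  also have "\<dots> = of_real (- ((3 * alpha * - (eta\<^sup>2 * H\<^sup>2) + eta\<^sup>2) * - (alpha * eta\<^sup>2 * H ^ 4)
           - 2 * - (eta\<^sup>2 * H\<^sup>2) * (alpha * - (eta\<^sup>2 * H\<^sup>2) + eta\<^sup>2) * (alpha * H\<^sup>2 + 1))
        / (- (alpha * eta\<^sup>2 * H ^ 4))\<^sup>2)"
    unfolding zero a21_den_at_a12_zero[OF zero] by simp
  also have "\<dots> = - of_real (((alpha * H\<^sup>2)\<^sup>2 - alpha * H\<^sup>2 + 2) / (alpha\<^sup>2 * H ^ 6))"
    unfolding evaluated by (simp only: of_real_minus)
  finally show ?thesis .
qed

lemma a21_deriv_at_a21_zero:
  assumes "eta \<noteq> 0"
    and zero: "of_real (alpha * rho) * (mu v tau eta)\<^sup>2 = - of_real (eta\<^sup>2)"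
  shows "a21_deriv v rho H alpha tau eta = - of_real (2 * alpha)"
proof -
  let ?P = "of_real rho * (mu v tau eta)\<^sup>2"
  have "?P \<noteq> 0"
    using zero assms(1) by auto
  have eta_sq: "of_real (eta\<^sup>2) = - (of_real (alpha * rho) * (mu v tau eta)\<^sup>2)"
    by (simp only: zero minus_minus)
  have "a21_deriv v rho H alpha tau eta
      = - ((3 * of_real (alpha * rho) * (mu v tau eta)\<^sup>2 + of_real (eta\<^sup>2)) / ?P)"
    using \<open>?P \<noteq> 0\<close> unfolding a21_deriv_def zero a21_den_at_a21_zero[OF zero]
    by (simp add: power2_eq_square)
  also have "\<dots> = - (2 * of_real alpha * ?P / ?P)"
    unfolding eta_sq by (simp add: algebra_simps)
  also have "\<dots> = - of_real (2 * alpha)"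
    using \<open>?P \<noteq> 0\<close> by simp
  finally show ?thesis .
qed

lemma a34_deriv_at_a34_zero:
  assumes "tau \<noteq> 0" "eps \<noteq> 0"
    and "of_real (eps\<^sup>2) * tau\<^sup>2 = - of_real (eta\<^sup>2)"
  shows "a34_deriv eps tau eta = - of_real (2 * eps)"
proof -
  have "of_real (eta\<^sup>2) = - (of_real (eps\<^sup>2) * tau\<^sup>2)"
    by (simp only: assms(3) minus_minus)
  then show ?thesis
    using assms(1,2) unfolding a34_deriv_def by (simp add: field_simps power2_eq_square)
qed

lemma dgamma_nonzero_at_a12_zero:
  assumes "rho \<noteq> 0" "H \<noteq> 0" "alpha \<noteq> 0"
    and m: "mu v (Complex g d) eta \<noteq> 0" and "a12 v rho H (Complex g d) eta = 0"
  shows "dgamma_nonzero (\<lambda>x. a12 v rho H (Complex x d) eta) g"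
    and "dgamma_nonzero (\<lambda>x. a21 v rho H alpha (Complex x d) eta) g"
proof -
  have zero: "of_real rho * (mu v (Complex g d) eta)\<^sup>2 = - of_real (eta\<^sup>2 * H\<^sup>2)"
    using assms a12_eq_0_iff by blast
  then have "eta \<noteq> 0"
    using assms(1) m by auto
  show "dgamma_nonzero (\<lambda>x. a12 v rho H (Complex x d) eta) g"
    by (rule dgamma_nonzeroI[OF a12_has_field_derivative[OF m]])
      (simp add: a12_deriv_at_a12_zero[OF m zero] assms(1))
  have den: "a21_den v rho H alpha (Complex g d) eta \<noteq> 0"
    using a21_den_at_a12_zero[OF zero] \<open>eta \<noteq> 0\<close> assms(2,3) by simp
  have "(alpha * H\<^sup>2)\<^sup>2 - alpha * H\<^sup>2 + 2 > 0"
    using zero_le_power2[of "alpha * H\<^sup>2 - 1/2"] by (simp add: power2_diff power_divide)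
  then have "((alpha * H\<^sup>2)\<^sup>2 - alpha * H\<^sup>2 + 2) / (alpha\<^sup>2 * H ^ 6) \<noteq> 0"
    using assms(2,3) by simp
  then show "dgamma_nonzero (\<lambda>x. a21 v rho H alpha (Complex x d) eta) g"
    by (intro dgamma_nonzeroI[OF a21_has_field_derivative[OF den]])
      (simp only: a21_deriv_at_a12_zero[OF assms(3,2) \<open>eta \<noteq> 0\<close> zero]
        neg_equal_0_iff_equal of_real_eq_0_iff not_False_eq_True)
qed

lemma dgamma_nonzero_at_a21_zero:
  assumes "rho > 0" "alpha > 0"
    and m: "mu v (Complex g d) eta \<noteq> 0" and den: "a21_den v rho H alpha (Complex g d) eta \<noteq> 0"
    and "a21 v rho H alpha (Complex g d) eta = 0"
  shows "dgamma_nonzero (\<lambda>x. a12 v rho H (Complex x d) eta) g"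
    and "dgamma_nonzero (\<lambda>x. a21 v rho H alpha (Complex x d) eta) g"
proof -
  have zero: "of_real (alpha * rho) * (mu v (Complex g d) eta)\<^sup>2 = - of_real (eta\<^sup>2)"
    using assms a21_eq_0_iff by blast
  then have "eta \<noteq> 0"
    using assms(1,2) m by auto
  have "1 + alpha * H\<^sup>2 > 0"
    using assms(2) by (simp add: add_pos_nonneg)
  then have "rho * (1 + alpha * H\<^sup>2) \<noteq> 0"
    using assms(1) by simp
  then show "dgamma_nonzero (\<lambda>x. a12 v rho H (Complex x d) eta) g"
    by (intro dgamma_nonzeroI[OF a12_has_field_derivative[OF m]])
      (simp only: a12_deriv_at_a21_zero[OF m zero] neg_equal_0_iff_equal of_real_eq_0_iff
        not_False_eq_True)
  show "dgamma_nonzero (\<lambda>x. a21 v rho H alpha (Complex x d) eta) g"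
    by (rule dgamma_nonzeroI[OF a21_has_field_derivative[OF den]])
      (simp add: a21_deriv_at_a21_zero[OF \<open>eta \<noteq> 0\<close> zero] less_imp_neq[OF assms(2), symmetric])
qed

lemma dgamma_nonzero_at_a34_zero:
  assumes "eps \<noteq> 0" and t: "Complex g d \<noteq> 0" and "a34 eps (Complex g d) eta = 0"
  shows "dgamma_nonzero (\<lambda>x. a34 eps (Complex x d) eta) g"
  using assms a34_eq_0_iff[OF t assms(1)]
  by (intro dgamma_nonzeroI[OF a34_has_field_derivative[OF t assms(1)]])
    (simp add: a34_deriv_at_a34_zero[OF t assms(1)])

theorem lemma7p5:
  fixes v rho H alpha eps g d eta :: real
  assumes "v \<noteq> 0" "rho > 0" "H \<noteq> 0" "alpha > 0" "alpha * H\<^sup>2 \<noteq> 1" "eps > 0"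
    and "in_Sigma g d eta"
  shows
    "(mu v (Complex g d) eta \<noteq> 0 \<and> a12 v rho H (Complex g d) eta = 0 \<longrightarrow>
        dgamma_nonzero (\<lambda>x. a12 v rho H (Complex x d) eta) g \<and>
        dgamma_nonzero (\<lambda>x. a21 v rho H alpha (Complex x d) eta) g)
   \<and> (mu v (Complex g d) eta \<noteq> 0 \<and> a21_den v rho H alpha (Complex g d) eta \<noteq> 0 \<and>
        a21 v rho H alpha (Complex g d) eta = 0 \<longrightarrow>
        dgamma_nonzero (\<lambda>x. a12 v rho H (Complex x d) eta) g \<and>
        dgamma_nonzero (\<lambda>x. a21 v rho H alpha (Complex x d) eta) g)
   \<and> (Complex g d \<noteq> 0 \<and> a34 eps (Complex g d) eta = 0 \<longrightarrow>
        dgamma_nonzero (\<lambda>x. a34 eps (Complex x d) eta) g)"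
  using assms
  by (auto intro: dgamma_nonzero_at_a12_zero dgamma_nonzero_at_a21_zero dgamma_nonzero_at_a34_zero)

end
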